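(* For all $l=1,\ldots,n-3$ and $m,s=1,\ldots,N$, the operator-valued monodromy matrix $\hat M_{[k]}$ satisfies \[ \nabla_{\boldsymbol\sigma_l,m} \nabla_{\boldsymbol\sigma_l,s}^{-1} \hat M_{[k]} = \hat M_{[k]} \nabla_{\boldsymbol\sigma_l,m} \nabla_{\boldsymbol\sigma_l,s}^{-1} \,. \] Equivalently, $\hat M_{[k]}$ is invariant under shifts of any $\boldsymbol\sigma_l$ by vectors of the root lattice of $\mathfrak{sl}_N$ (vectors in $\mathbb Z^N$ with vanishing sum of components).
   Context: Setting: $W_N$-algebra with central charge $c=N-1$; semi-degenerate conformal blocks on the sphere with generic punctures at $z_0=0$ (weight $\boldsymbol\theta_0$) and $z_{n-1}=\infty$ (weight $\boldsymbol\theta_{n-1}$), semi-degenerate fields $V_{a_k}(z_k)$ with weights $a_k\boldsymbol h_1$ at $z_1,\ldots,z_{n-2}$, and intermediate weights $\boldsymbol\sigma_1,\ldots,\boldsymbol\sigma_{n-3}\in\mathbb C^N$ (components summing to zero). Here $\boldsymbol h_s$ has components $h_s^{(k)}=\delta_{sk}-1/N$. The fusion matrix is $F_{lj}(\boldsymbol\sigma',a,\boldsymbol\sigma)=\prod_{k\ne l}\frac{\sin\pi((a+1)/N+\sigma'^{(j)}-\sigma^{(k)})}{\sin\pi(\sigma^{(k)}-\sigma^{(l)})}$, with inverse $F^{-1}(\boldsymbol\sigma',a,\boldsymbol\sigma)=F(-\boldsymbol\sigma,a,-\boldsymbol\sigma')$. The braiding matrix is $B(\boldsymbol\sigma)=\operatorname{diag}(e^{i\pi\sigma^{(1)}},\ldots,e^{i\pi\sigma^{(N)}})$.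 The shift operator $\nabla_{\boldsymbol\sigma,s}$ acts on functions of $\boldsymbol\sigma$ by $\nabla_{\boldsymbol\sigma,s}\mathcal F(\boldsymbol\sigma)=\mathcal F(\boldsymbol\sigma+\boldsymbol h_s)$, and $\nabla_{\boldsymbol\sigma}=\operatorname{diag}(\nabla_{\boldsymbol\sigma,1},\ldots,\nabla_{\boldsymbol\sigma,N})$. Define \[ \hat V_{[k]} = B(-\boldsymbol{\theta}_{n-1}) F^{-1}(-\boldsymbol{\theta}_{n-1},a_{n-2}-1,\boldsymbol{\sigma}_{n-3}) \nabla_{\boldsymbol{\sigma}_{n-3}} F^{-1}(\boldsymbol{\sigma}_{n-3},a_{n-3},\boldsymbol{\sigma}_{n-4}) \nabla_{\boldsymbol{\sigma}_{n-4}} \cdots \nabla_{\boldsymbol{\sigma}_{k+1}} F^{-1}(\boldsymbol{\sigma}_{k+1},a_{k+1},\boldsymbol{\sigma}_{k}), \] and $\hat M_{[k]}=\hat V_{[k]}B^2(\boldsymbol\sigma_k)\hat V_{[k]}^{-1}$. This $\hat M_{[k]}$ is the operator-valued monodromy of the column of conformal blocks $\mathcal F_m(\boldsymbol\sigma|y)=C_m\langle -\boldsymbol\theta_{n-1}+\boldsymbol h_m|\Psi(y)V_{a_{n-2}}(z_{n-2})\mathcal P_{\boldsymbol\sigma_{n-3}}\cdots\mathcal P_{\boldsymbol\sigma_1}V_{a_1}(z_1)|\boldsymbol\theta_0\rangle$ (with $\Psi(y)$ the column of degenerate fields $\psi_j(y)$, $C_m=\operatorname{diag}((-1)^{N\delta_{jm}})$)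 under analytic continuation in $y$ along the loop encircling $z_0,\ldots,z_k$. *)

theory Defs
  imports "HOL-Analysis.Analysis"
begin

(* Configurations: sigma :: nat => complex^'n, sigma l = boldsymbol sigma_l (l = 1..n-3);
   N = CARD('n).  A column of functions of the sigma's: 'n cfg => complex^'n.
   Operator-valued N x N matrices are represented by the linear maps they induce on
   such columns; matrix product of operator matrices = composition. *)
type_synonym 'n cfg = "nat \<Rightarrow> complex^'n"
type_synonym 'n col = "'n cfg \<Rightarrow> complex^'n"
type_synonym 'n opr = "'n col \<Rightarrow> 'n col"

definition hvec :: "'n::finite \<Rightarrow> complex^'n" where
  "hvec s = (\<chi> k. (if k = s then 1 else 0) - 1 / of_nat CARD('n))"

definition shift1 :: "nat \<Rightarrow> 'n::finite \<Rightarrow> 'n opr" where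
  "shift1 l s G = (\<lambda>\<sigma>. G (\<sigma>(l := \<sigma> l + hvec s)))"

definition shift1_inv :: "nat \<Rightarrow> 'n::finite \<Rightarrow> 'n opr" where
  "shift1_inv l s G = (\<lambda>\<sigma>. G (\<sigma>(l := \<sigma> l - hvec s)))"

definition nabla :: "nat \<Rightarrow> 'n::finite opr" where
  "nabla l G = (\<lambda>\<sigma>. \<chi> j. G (\<sigma>(l := \<sigma> l + hvec j)) $ j)"

definition nabla_inv :: "nat \<Rightarrow> 'n::finite opr" where
  "nabla_inv l G = (\<lambda>\<sigma>. \<chi> j. G (\<sigma>(l := \<sigma> l - hvec j)) $ j)"

definition mulm :: "('n::finite cfg \<Rightarrow> complex^'n^'n) \<Rightarrow> 'n opr" where
  "mulm A G = (\<lambda>\<sigma>. A \<sigma> *v G \<sigma>)"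

definition Fmat :: "complex^'n::finite \<Rightarrow> complex \<Rightarrow> complex^'n \<Rightarrow> complex^'n^'n" where
  "Fmat \<sigma>' a \<sigma> = (\<chi> l j. \<Prod>k\<in>UNIV - {l}.
      sin (complex_of_real pi * ((a + 1) / of_nat CARD('n) + \<sigma>' $ j - \<sigma> $ k))
      / sin (complex_of_real pi * (\<sigma> $ k - \<sigma> $ l)))"

definition Finv :: "complex^'n::finite \<Rightarrow> complex \<Rightarrow> complex^'n \<Rightarrow> complex^'n^'n" where
  "Finv \<sigma>' a \<sigma> = Fmat (- \<sigma>) a (- \<sigma>')"

definition Bmat :: "complex^'n::finite \<Rightarrow> complex^'n^'n" where
  "Bmat \<sigma> = (\<chi> i j. if i = j then exp (\<i> * complex_of_real pi * \<sigma> $ i) else 0)"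

fun Wop :: "(nat \<Rightarrow> complex) \<Rightarrow> nat \<Rightarrow> nat \<Rightarrow> 'n::finite opr" where
  "Wop a k 0 = id"
| "Wop a k (Suc j) = (if Suc j \<le> k then id
     else nabla (Suc j) \<circ> mulm (\<lambda>\<sigma>. Finv (\<sigma> (Suc j)) (a (Suc j)) (\<sigma> j)) \<circ> Wop a k j)"

(* its inverse, using (F^{-1}(sigma',a,sigma))^{-1} = F(sigma',a,sigma) *)
fun Winv :: "(nat \<Rightarrow> complex) \<Rightarrow> nat \<Rightarrow> nat \<Rightarrow> 'n::finite opr" where
  "Winv a k 0 = id"
| "Winv a k (Suc j) = (if Suc j \<le> k then id
     else Winv a k j \<circ> mulm (\<lambda>\<sigma>. Fmat (\<sigma> (Suc j)) (a (Suc j)) (\<sigma> j)) \<circ> nabla_inv (Suc j))"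

(* hat V_[k]; theta = boldsymbol theta_{n-1} *)
definition Vhat :: "nat \<Rightarrow> nat \<Rightarrow> (nat \<Rightarrow> complex) \<Rightarrow> complex^'n::finite \<Rightarrow> 'n opr" where
  "Vhat n k a \<theta> = mulm (\<lambda>_. Bmat (- \<theta>))
      \<circ> mulm (\<lambda>\<sigma>. Finv (- \<theta>) (a (n - 2) - 1) (\<sigma> (n - 3))) \<circ> Wop a k (n - 3)"

definition Vhat_inv :: "nat \<Rightarrow> nat \<Rightarrow> (nat \<Rightarrow> complex) \<Rightarrow> complex^'n::finite \<Rightarrow> 'n opr" where
  "Vhat_inv n k a \<theta> = Winv a k (n - 3)
      \<circ> mulm (\<lambda>\<sigma>. Fmat (- \<theta>) (a (n - 2) - 1) (\<sigma> (n - 3))) \<circ> mulm (\<lambda>_. Bmat \<theta>)"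

definition Mhat :: "nat \<Rightarrow> nat \<Rightarrow> (nat \<Rightarrow> complex) \<Rightarrow> complex^'n::finite \<Rightarrow> 'n opr" where
  "Mhat n k a \<theta> = Vhat n k a \<theta> \<circ> mulm (\<lambda>\<sigma>. Bmat (\<sigma> k) ** Bmat (\<sigma> k)) \<circ> Vhat_inv n k a \<theta>"

end

theory Submission
  imports Defs
begin

(* Shifting \<sigma>_l by an integer vector d changes every sine in the fusion matrices by a sign:
   F(\<sigma>', a, \<sigma> + d) = D F(\<sigma>', a, \<sigma>) and F(\<sigma>' + d, a, \<sigma>) = F(\<sigma>', a, \<sigma>) D for the
   diagonal matrix D = diag((-1)^((N-1) d_i)), which squares to 1 and commutes with the shift
   operators \<nabla>.  In V_[k] the two factors depending on \<sigma>_l are adjacent up to a \<nabla>, so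
   their signs cancel; only for l = k does a single D survive, next to B(\<sigma>_k)^2, which is
   diagonal and invariant under integer shifts, so it cancels against the D coming from
   V_[k]^-1.  Finally \<nabla>_{\<sigma>_l,m} \<nabla>_{\<sigma>_l,s}^-1 is the shift by h_m - h_s = e_m - e_s. *)

definition diag_mat :: "('n::finite \<Rightarrow> 'a::semiring_1) \<Rightarrow> 'a^'n^'n" where
  "diag_mat f = (\<chi> i j. if i = j then f i else 0)"

lemma diag_mat_mult_nth: "(diag_mat f ** A) $ i $ j = f i * A $ i $ j"
  by (simp add: diag_mat_def matrix_matrix_mult_def if_distrib if_distribR cong: if_cong)

lemma mult_diag_mat_nth: "(A ** diag_mat f) $ i $ j = A $ i $ j * f j"
  by (simp add: diag_mat_def matrix_matrix_mult_def if_distrib if_distribR cong: if_cong)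

lemma diag_mat_mulv_nth: "(diag_mat f *v x) $ i = f i * x $ i"
  by (simp add: diag_mat_def matrix_vector_mult_def if_distrib if_distribR cong: if_cong)

lemma diag_mat_mult_diag_mat: "diag_mat f ** diag_mat g = diag_mat (\<lambda>i. f i * g i)"
  by (simp add: vec_eq_iff diag_mat_mult_nth) (simp add: diag_mat_def)

lemma Bmat_eq_diag_mat: "Bmat \<sigma> = diag_mat (\<lambda>i. exp (\<i> * complex_of_real pi * \<sigma> $ i))"
  by (simp add: Bmat_def diag_mat_def)

lemma sin_pi_add_int: "sin (of_real pi * (z + of_int n)) = (-1) powi n * sin (of_real pi * z :: complex)"
proof -
  have "cos (of_real (pi * of_int n)) = ((-1) powi n :: complex)"
    by (simp only: cos_of_real cos_npi_int) (simp add: power_int_minus_left)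
  moreover have "sin (of_real (pi * of_int n)) = (0 :: complex)"
    by (simp only: sin_of_real sin_npi_int) simp
  moreover have "of_real pi * (z + of_int n) = of_real pi * z + of_real (pi * of_int n)"
    by (simp add: algebra_simps)
  ultimately show ?thesis
    by (simp only: sin_add) simp
qed

definition int_vec :: "('n::finite \<Rightarrow> int) \<Rightarrow> complex^'n" where
  "int_vec d = (\<chi> i. of_int (d i))"

definition sign_diag :: "('n::finite \<Rightarrow> int) \<Rightarrow> complex^'n^'n" where
  "sign_diag d = diag_mat (\<lambda>i. ((-1) powi d i) ^ (CARD('n) - 1))"

lemma uminus_add_int_vec: "- (x + int_vec d) = - x + int_vec (\<lambda>i. - d i)"
  by (simp add: vec_eq_iff int_vec_def)

lemma sign_diag_uminus: "sign_diag (\<lambda>i. - d i) = sign_diag d"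
  by (simp add: sign_diag_def power_int_minus_one_minus)

lemma sign_diag_mulv_sign_diag_mulv: "sign_diag d *v (sign_diag d *v x) = x"
  by (simp add: vec_eq_iff sign_diag_def diag_mat_mulv_nth mult.assoc[symmetric]
      flip: power_mult_distrib)

lemma prod_Diff_singleton_const_mult:
  "(\<Prod>k\<in>UNIV - {l}. s * f k) = s ^ (CARD('n) - 1) * (\<Prod>k\<in>UNIV - {l::'n::finite}. f k)"
  by (simp add: prod.distrib card_Diff_singleton)

lemma Fmat_add_int_vec_right:
  fixes x y :: "complex^'n::finite"
  shows "Fmat x c (y + int_vec d) = sign_diag d ** Fmat x c y"
proof -
  let ?c = "(c + 1) / of_nat CARD('n)"
  have factor: "sin (of_real pi * (?c + x $ j - (y + int_vec d) $ k))
      / sin (of_real pi * ((y + int_vec d) $ k - (y + int_vec d) $ l))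
    = (-1) powi d l * (sin (of_real pi * (?c + x $ j - y $ k)) / sin (of_real pi * (y $ k - y $ l)))"
    for j k l
  proof -
    have "?c + x $ j - (y + int_vec d) $ k = (?c + x $ j - y $ k) + of_int (- d k)"
      and "(y + int_vec d) $ k - (y + int_vec d) $ l = (y $ k - y $ l) + of_int (d k - d l)"
      by (simp_all add: int_vec_def)
    then show ?thesis
      by (simp only: sin_pi_add_int) (auto simp: power_int_minus_left)
  qed
  show ?thesis
    unfolding vec_eq_iff sign_diag_def diag_mat_mult_nth Fmat_def vec_lambda_beta factor
      prod_Diff_singleton_const_mult by blast
qed

lemma Fmat_add_int_vec_left:
  fixes x y :: "complex^'n::finite"
  shows "Fmat (x + int_vec d) c y = Fmat x c y ** sign_diag d"
proof -
  let ?c = "(c + 1) / of_nat CARD('n)"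
  have factor: "sin (of_real pi * (?c + (x + int_vec d) $ j - y $ k)) / sin (of_real pi * (y $ k - y $ l))
    = (-1) powi d j * (sin (of_real pi * (?c + x $ j - y $ k)) / sin (of_real pi * (y $ k - y $ l)))"
    for j k l
  proof -
    have "?c + (x + int_vec d) $ j - y $ k = (?c + x $ j - y $ k) + of_int (d j)"
      by (simp add: int_vec_def)
    then show ?thesis
      by (simp only: sin_pi_add_int) simp
  qed
  show ?thesis
    unfolding vec_eq_iff sign_diag_def mult_diag_mat_nth Fmat_def vec_lambda_beta factor
      prod_Diff_singleton_const_mult by (simp add: mult.commute)
qed

lemma Finv_add_int_vec_left: "Finv (x + int_vec d) c y = sign_diag d ** Finv x c y"
  unfolding Finv_def uminus_add_int_vec Fmat_add_int_vec_right sign_diag_uminus ..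

lemma Finv_add_int_vec_right: "Finv x c (y + int_vec d) = Finv x c y ** sign_diag d"
  unfolding Finv_def uminus_add_int_vec Fmat_add_int_vec_left sign_diag_uminus ..

lemma exp_pi_add_int_squared:
  "exp (\<i> * of_real pi * (z + of_int n)) * exp (\<i> * of_real pi * (z + of_int n))
   = exp (\<i> * of_real pi * z) * exp (\<i> * of_real pi * z)"
proof -
  have "exp (\<i> * of_real pi * (z + of_int n)) * exp (\<i> * of_real pi * (z + of_int n))
      = exp (2 * \<i> * of_real pi * z + \<i> * (of_int n * (of_real pi * 2)))"
    by (simp add: exp_add[symmetric] algebra_simps)
  also have "\<dots> = exp (\<i> * of_real pi * z) * exp (\<i> * of_real pi * z)"
    by (simp add: exp_add[symmetric] algebra_simps)
  finally show ?thesis .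
qed

lemma Bmat_squared_add_int_vec: "Bmat (x + int_vec d) ** Bmat (x + int_vec d) = Bmat x ** Bmat x"
  by (simp add: Bmat_eq_diag_mat diag_mat_mult_diag_mat int_vec_def exp_pi_add_int_squared)

definition sign_op :: "('n::finite \<Rightarrow> int) \<Rightarrow> 'n opr" where
  "sign_op d = mulm (\<lambda>_. sign_diag d)"

definition shift_op :: "nat \<Rightarrow> complex^'n::finite \<Rightarrow> 'n opr" where
  "shift_op l v G = (\<lambda>\<sigma>. G (\<sigma>(l := \<sigma> l + v)))"

lemma sign_op_sign_op: "sign_op d (sign_op d G) = G"
  by (simp add: sign_op_def mulm_def sign_diag_mulv_sign_diag_mulv)

lemma sign_op_nabla: "sign_op d (nabla j G) = nabla j (sign_op d G)"
  by (rule ext) (simp add: sign_op_def mulm_def nabla_def sign_diag_def vec_eq_iff diag_mat_mulv_nth)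

lemma sign_op_nabla_inv: "sign_op d (nabla_inv j G) = nabla_inv j (sign_op d G)"
  by (rule ext) (simp add: sign_op_def mulm_def nabla_inv_def sign_diag_def vec_eq_iff diag_mat_mulv_nth)

lemma sign_op_mulm_diag_mat:
  "sign_op d (mulm (\<lambda>\<sigma>. diag_mat (f \<sigma>)) G) = mulm (\<lambda>\<sigma>. diag_mat (f \<sigma>)) (sign_op d G)"
  by (rule ext) (simp add: sign_op_def mulm_def sign_diag_def vec_eq_iff diag_mat_mulv_nth)

lemma mulm_sign_diag_mult: "mulm (\<lambda>\<sigma>. sign_diag d ** A \<sigma>) G = sign_op d (mulm A G)"
  by (simp add: sign_op_def mulm_def matrix_vector_mul_assoc)

lemma mulm_mult_sign_diag: "mulm (\<lambda>\<sigma>. A \<sigma> ** sign_diag d) G = mulm A (sign_op d G)"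
  by (simp add: sign_op_def mulm_def matrix_vector_mul_assoc)

lemma shift_op_mulm: "shift_op l v (mulm A G) = mulm (\<lambda>\<sigma>. A (\<sigma>(l := \<sigma> l + v))) (shift_op l v G)"
  by (simp add: shift_op_def mulm_def)

lemma shift_op_nabla:
  fixes G :: "'n::finite col"
  shows "shift_op l v (nabla j G) = nabla j (shift_op l v G)"
proof -
  have "(\<sigma>(j := \<sigma> j + hvec i))(l := (\<sigma>(j := \<sigma> j + hvec i)) l + v)
     = (\<sigma>(l := \<sigma> l + v))(j := (\<sigma>(l := \<sigma> l + v)) j + hvec i)" for \<sigma> :: "'n cfg" and i
    by (cases "l = j") (auto simp: fun_eq_iff algebra_simps)
  then show ?thesis
    by (simp add: shift_op_def nabla_def)
qed

lemma shift_op_nabla_inv: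
  fixes G :: "'n::finite col"
  shows "shift_op l v (nabla_inv j G) = nabla_inv j (shift_op l v G)"
proof -
  have "(\<sigma>(j := \<sigma> j - hvec i))(l := (\<sigma>(j := \<sigma> j - hvec i)) l + v)
     = (\<sigma>(l := \<sigma> l + v))(j := (\<sigma>(l := \<sigma> l + v)) j - hvec i)" for \<sigma> :: "'n cfg" and i
    by (cases "l = j") (auto simp: fun_eq_iff algebra_simps)
  then show ?thesis
    by (simp add: shift_op_def nabla_inv_def)
qed

lemma Wop_id: "j \<le> k \<Longrightarrow> Wop a k j = id"
  by (induction j) auto

lemma Winv_id: "j \<le> k \<Longrightarrow> Winv a k j = id"
  by (induction j) auto

lemma shift_op_Wop:
  fixes G :: "'n::finite col"
  shows "shift_op l (int_vec d) (Wop a k j G)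
    = (if l = j \<and> k < j then sign_op d else id)
        (Wop a k j ((if l = k \<and> k < j then sign_op d else id) (shift_op l (int_vec d) G)))"
proof (induction j arbitrary: G)
  case 0
  show ?case by simp
next
  case (Suc j)
  show ?case
  proof (cases "Suc j \<le> k")
    case True
    then show ?thesis by simp
  next
    case False
    consider "l = Suc j" | "l = j" "k < j" | "l = j" "k = j" | "l \<noteq> j" "l \<noteq> Suc j"
      using False by linarith
    then show ?thesis
    proof cases
      case 1
      then show ?thesis using False Suc.IH[of G]
        by (simp add: shift_op_nabla shift_op_mulm Finv_add_int_vec_left mulm_sign_diag_mult
            sign_op_nabla)
    next
      case 2
      then show ?thesis using False Suc.IH[of G]
        by (simp add: shift_op_nabla shift_op_mulm Finv_add_int_vec_right mulm_mult_sign_diag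
            sign_op_sign_op)
    next
      case 3
      then show ?thesis using False Suc.IH[of G]
        by (simp add: shift_op_nabla shift_op_mulm Finv_add_int_vec_right mulm_mult_sign_diag
            Wop_id)
    next
      case 4
      then show ?thesis using False Suc.IH[of G]
        by (simp add: shift_op_nabla shift_op_mulm less_Suc_eq)
    qed
  qed
qed

lemma shift_op_Winv:
  fixes G :: "'n::finite col"
  shows "shift_op l (int_vec d) (Winv a k j G)
    = (if l = k \<and> k < j then sign_op d else id)
        (Winv a k j ((if l = j \<and> k < j then sign_op d else id) (shift_op l (int_vec d) G)))"
proof (induction j arbitrary: G)
  case 0
  show ?case by simp
next
  case (Suc j)
  show ?case
  proof (cases "Suc j \<le> k")
    case True
    then show ?thesis by simp
  next
    case False
    consider "l = Suc j" | "l = j" "k < j" | "l = j" "k = j" | "l \<noteq> j" "l \<noteq> Suc j"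
      using False by linarith
    then show ?thesis
    proof cases
      case 1
      then show ?thesis using False Suc.IH
        by (simp add: shift_op_nabla_inv shift_op_mulm Fmat_add_int_vec_left mulm_mult_sign_diag
            sign_op_nabla_inv)
    next
      case 2
      then show ?thesis using False Suc.IH
        by (simp add: shift_op_nabla_inv shift_op_mulm Fmat_add_int_vec_right mulm_sign_diag_mult
            sign_op_sign_op)
    next
      case 3
      then show ?thesis using False Suc.IH
        by (simp add: shift_op_nabla_inv shift_op_mulm Fmat_add_int_vec_right mulm_sign_diag_mult
            Winv_id)
    next
      case 4
      then show ?thesis using False Suc.IH
        by (simp add: shift_op_nabla_inv shift_op_mulm less_Suc_eq)
    qed
  qed
qed

lemma shift_op_Vhat:
  fixes G :: "'n::finite col"
  assumes "k \<le> n - 3" and "l \<le> n - 3"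
  shows "shift_op l (int_vec d) (Vhat n k a \<theta> G)
    = Vhat n k a \<theta> ((if l = k then sign_op d else id) (shift_op l (int_vec d) G))"
proof -
  consider "l = n - 3" "k < n - 3" | "l = n - 3" "k = n - 3" | "l \<noteq> n - 3"
    using assms by linarith
  then show ?thesis
  proof cases
    case 1
    then show ?thesis
      by (simp add: Vhat_def shift_op_mulm shift_op_Wop Finv_add_int_vec_right mulm_mult_sign_diag
          sign_op_sign_op)
  next
    case 2
    then show ?thesis
      by (simp add: Vhat_def shift_op_mulm shift_op_Wop Finv_add_int_vec_right mulm_mult_sign_diag
          Wop_id)
  next
    case 3
    then show ?thesis using assms
      by (auto simp add: Vhat_def shift_op_mulm shift_op_Wop)
  qed
qed

lemma shift_op_Vhat_inv:
  fixes G :: "'n::finite col"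
  assumes "k \<le> n - 3" and "l \<le> n - 3"
  shows "shift_op l (int_vec d) (Vhat_inv n k a \<theta> G)
    = (if l = k then sign_op d else id) (Vhat_inv n k a \<theta> (shift_op l (int_vec d) G))"
proof -
  consider "l = n - 3" "k < n - 3" | "l = n - 3" "k = n - 3" | "l \<noteq> n - 3"
    using assms by linarith
  then show ?thesis
  proof cases
    case 1
    then show ?thesis
      by (simp add: Vhat_inv_def shift_op_mulm shift_op_Winv Fmat_add_int_vec_right
          mulm_sign_diag_mult sign_op_sign_op)
  next
    case 2
    then show ?thesis
      by (simp add: Vhat_inv_def shift_op_mulm shift_op_Winv Fmat_add_int_vec_right
          mulm_sign_diag_mult Winv_id)
  next
    case 3
    then show ?thesis using assms
      by (auto simp add: Vhat_inv_def shift_op_mulm shift_op_Winv)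
  qed
qed

lemma shift_op_Mhat:
  fixes G :: "'n::finite col"
  assumes "k \<le> n - 3" and "l \<le> n - 3"
  shows "shift_op l (int_vec d) (Mhat n k a \<theta> G) = Mhat n k a \<theta> (shift_op l (int_vec d) G)"
proof -
  have "shift_op l (int_vec d) (mulm (\<lambda>\<sigma>. Bmat (\<sigma> k) ** Bmat (\<sigma> k)) H)
      = mulm (\<lambda>\<sigma>. Bmat (\<sigma> k) ** Bmat (\<sigma> k)) (shift_op l (int_vec d) H)" for H :: "'n col"
    by (cases "k = l") (simp_all add: shift_op_mulm Bmat_squared_add_int_vec)
  moreover have "sign_op d (mulm (\<lambda>\<sigma>. Bmat (\<sigma> k) ** Bmat (\<sigma> k)) H)
      = mulm (\<lambda>\<sigma>. Bmat (\<sigma> k) ** Bmat (\<sigma> k)) (sign_op d H)" for H :: "'n col"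
    by (simp add: Bmat_eq_diag_mat diag_mat_mult_diag_mat sign_op_mulm_diag_mat)
  ultimately show ?thesis
    by (simp add: Mhat_def shift_op_Vhat[OF assms] shift_op_Vhat_inv[OF assms] sign_op_sign_op)
qed

lemma shift1_shift1_inv: "shift1 l m (shift1_inv l s G) = shift_op l (hvec m - hvec s) G"
  by (simp add: fun_eq_iff shift1_def shift1_inv_def shift_op_def algebra_simps)

lemma hvec_diff: "hvec m - hvec s = int_vec (\<lambda>i. of_bool (i = m) - of_bool (i = s))"
  by (simp add: vec_eq_iff hvec_def int_vec_def)

theorem proposition4p4:
  fixes n k l :: nat and m s :: "'n::finite" and a :: "nat \<Rightarrow> complex"
    and \<theta> :: "complex^'n" and G :: "'n col" and \<sigma> :: "'n cfg"
  assumes "CARD('n) \<ge> 2" and "4 \<le> n"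
    and "1 \<le> k" and "k \<le> n - 3"
    and "1 \<le> l" and "l \<le> n - 3"
    and "(\<Sum>i\<in>UNIV. \<theta> $ i) = 0"
    and "\<forall>j\<in>{1..n-3}. (\<Sum>i\<in>UNIV. \<sigma> j $ i) = 0"
  shows "shift1 l m (shift1_inv l s (Mhat n k a \<theta> G)) \<sigma>
       = Mhat n k a \<theta> (shift1 l m (shift1_inv l s G)) \<sigma>"
  unfolding shift1_shift1_inv hvec_diff shift_op_Mhat[OF assms(4,6)] ..

end
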